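(* Let $m\in\{2,3,\dots\}\cup\{\infty\}$ and let $T_n$ be uniformly distributed on $\mathsf{T}^{(m)}_n$. Given $T_n$, let $v^*$ be a uniformly chosen vertex of $T_n$ and $T^{( * )}_n$ the subtree of $T_n$ rooted at $v^*$ (consisting of $v^*$ and its descendants). Then for every $1\leq k\leq n$, conditionally on $\#T^{( * )}_n=k$, $T^{( * )}_n$ is uniformly distributed on $\mathsf{T}^{(m)}_k$.
   Context: $\mathsf{T}^{(m)}_n$ is the set of rooted unordered trees with $n$ vertices in which every vertex has at most $m$ children; $\#t$ is the number of vertices of $t$. *)

theory Defs
  imports "HOL-Probability.Probability" "HOL-Library.Multiset" "HOL-Library.Extended_Nat"
begin

text \<open>Rooted unordered (unlabelled) trees: a node is the multiset of its child subtrees.\<close>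
datatype utree = Node "utree multiset"

primrec tsize :: "utree \<Rightarrow> nat" where
  "tsize (Node M) = Suc (sum_mset (image_mset tsize M))"

primrec bounded_outdeg :: "enat \<Rightarrow> utree \<Rightarrow> bool" where
  "bounded_outdeg m (Node M) = (enat (size M) \<le> m \<and> (\<forall>b \<in># image_mset (bounded_outdeg m) M. b))"

definition trees :: "enat \<Rightarrow> nat \<Rightarrow> utree set" where
  "trees m n = {t. tsize t = n \<and> bounded_outdeg m t}"

text \<open>Multiset of fringe subtrees: one entry per vertex (the subtree rooted there).\<close>
primrec fringe :: "utree \<Rightarrow> utree multiset" where
  "fringe (Node M) = add_mset (Node M) (sum_mset (image_mset fringe M))"

definition fringe_subtree_pmf :: "enat \<Rightarrow> nat \<Rightarrow> utree pmf" where
  "fringe_subtree_pmf m n = bind_pmf (pmf_of_set (trees m n)) (\<lambda>T. pmf_of_multiset (fringe T))"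

end

theory Submission
  imports Defs
begin

text \<open>Every tree in T^(m)_n has exactly n vertices, so the probability that the fringe subtree at a
uniform vertex equals t is proportional to the total number of occurrences of t as a fringe subtree
among all trees of T^(m)_n. For trees a and b of the same size, simultaneously replacing every
fringe subtree equal to a by b and vice versa is a size- and degree-preserving involution of
T^(m)_n that exchanges these occurrence counts of a and b. Hence the count, and so the conditional
probability, is the same for all trees of T^(m)_k.\<close>

lemma count_sum_mset_image:
  "count (\<Sum>\<^sub># (image_mset f M)) x = \<Sum>\<^sub># (image_mset (\<lambda>c. count (f c) x) M)"
  by (induct M) auto

lemma tsize_pos: "0 < tsize t"
  by (cases t) auto

lemma tsize_child_less: "c \<in># M \<Longrightarrow> tsize c < tsize (Node M)"
  by (induct M) auto

lemma tsize_le_of_in_fringe: "s \<in># fringe t \<Longrightarrow> tsize s \<le> tsize t"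
proof (induct t)
  case (Node M)
  show ?case
  proof (cases "s = Node M")
    case False
    with Node.prems obtain c where c: "c \<in># M" "s \<in># fringe c" by auto
    with Node.hyps have "tsize s \<le> tsize c" by blast
    with tsize_child_less[OF c(1)] show ?thesis by simp
  qed simp
qed

lemma tsize_less_of_in_fringe_child:
  "c \<in># M \<Longrightarrow> s \<in># fringe c \<Longrightarrow> tsize s < tsize (Node M)"
  using tsize_le_of_in_fringe tsize_child_less le_less_trans by blast

lemma count_fringe_eq_0:
  assumes "tsize t \<le> tsize s" and "s \<noteq> t"
  shows "count (fringe t) s = 0"
proof (cases t)
  case (Node M)
  have "s \<notin># \<Sum>\<^sub># (image_mset fringe M)"
    using assms Node tsize_less_of_in_fringe_child by fastforce
  then have "count (\<Sum>\<^sub># (image_mset fringe M)) s = 0"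
    by (metis not_in_iff)
  with assms Node show ?thesis by simp
qed

lemma count_fringe_self: "count (fringe t) t = 1"
proof (cases t)
  case (Node M)
  have "t \<notin># \<Sum>\<^sub># (image_mset fringe M)"
    using Node tsize_less_of_in_fringe_child by fastforce
  then have "count (\<Sum>\<^sub># (image_mset fringe M)) t = 0"
    by (metis not_in_iff)
  with Node show ?thesis by simp
qed

lemma bounded_outdeg_of_in_fringe:
  "s \<in># fringe t \<Longrightarrow> bounded_outdeg m t \<Longrightarrow> bounded_outdeg m s"
  by (induct t) auto

lemma size_fringe: "size (fringe t) = tsize t"
  by (induct t) (simp add: multiset.map_comp o_def cong: image_mset_cong)

lemma size_le_sum_tsize: "size M \<le> \<Sum>\<^sub># (image_mset tsize M)"
proof (induct M)
  case (add x M)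
  then show ?case using tsize_pos[of x] by simp
qed simp

lemma finite_tsize_le: "finite {t. tsize t \<le> n}"
proof (induct n)
  case 0
  then show ?case by (simp add: tsize_pos[THEN gr_implies_not0])
next
  case (Suc n)
  have "{t. tsize t \<le> Suc n} \<subseteq> Node ` (\<Union>j\<le>n. multisets_of_size {t. tsize t \<le> n} j)"
  proof
    fix t assume t: "t \<in> {t. tsize t \<le> Suc n}"
    obtain M where M: "t = Node M" by (cases t)
    have sum_le: "\<Sum>\<^sub># (image_mset tsize M) \<le> n" using t M by simp
    have "set_mset M \<subseteq> {t. tsize t \<le> n}"
      using sum_le M tsize_child_less by fastforce
    moreover have "size M \<le> n" using sum_le size_le_sum_tsize[of M] by simp
    ultimately show "t \<in> Node ` (\<Union>j\<le>n. multisets_of_size {t. tsize t \<le> n} j)"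
      using M unfolding multisets_of_size_def by blast
  qed
  moreover have "finite (Node ` (\<Union>j\<le>n. multisets_of_size {t. tsize t \<le> n} j))"
    using Suc by blast
  ultimately show ?case by (rule finite_subset)
qed

lemma finite_trees: "finite (trees m n)"
  by (rule finite_subset[OF _ finite_tsize_le[of n]]) (auto simp: trees_def)

text \<open>The replacement works top-down. When a and b have the same size, neither occurs as a proper
fringe subtree of the other, which is what makes it an involution.\<close>

primrec swap_subtrees :: "utree \<Rightarrow> utree \<Rightarrow> utree \<Rightarrow> utree" where
  "swap_subtrees a b (Node M) =
     (if Node M = a then b else if Node M = b then a else Node (image_mset (swap_subtrees a b) M))"

lemma swap_subtrees_left: "swap_subtrees a b a = b"
  by (cases a) simp

lemma swap_subtrees_right: "swap_subtrees a b b = a"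
  by (cases b) auto

lemma swap_subtrees_fixes:
  assumes "tsize a = tsize b"
  shows "tsize t \<le> tsize a \<Longrightarrow> t \<noteq> a \<Longrightarrow> t \<noteq> b \<Longrightarrow> swap_subtrees a b t = t"
proof (induct t)
  case (Node M)
  have "image_mset (swap_subtrees a b) M = M"
  proof (rule multiset.map_ident_strong)
    fix c assume "c \<in># M"
    with Node.prems have "tsize c < tsize a" using tsize_child_less by fastforce
    then have "c \<noteq> a" "c \<noteq> b" "tsize c \<le> tsize a"
      using assms by auto
    then show "swap_subtrees a b c = c" using Node.hyps[OF \<open>c \<in># M\<close>] by blast
  qed
  with Node.prems show ?case by simp
qed

lemma tsize_swap_subtrees:
  assumes "tsize a = tsize b"
  shows "tsize (swap_subtrees a b t) = tsize t"
proof (induct t)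
  case (Node M)
  show ?case
  proof (cases "Node M \<in> {a, b}")
    case True
    then show ?thesis
      using assms swap_subtrees_left[of a b] swap_subtrees_right[of a b] by (elim insertE) auto
  next
    case False
    have "image_mset (\<lambda>c. tsize (swap_subtrees a b c)) M = image_mset tsize M"
      using Node.hyps by (rule image_mset_cong)
    with False show ?thesis by (simp add: multiset.map_comp o_def)
  qed
qed

lemma swap_subtrees_notin:
  assumes "tsize a = tsize b" and "t \<notin> {a, b}"
  shows "swap_subtrees a b t \<notin> {a, b}"
proof
  assume swapped: "swap_subtrees a b t \<in> {a, b}"
  then have "tsize t = tsize a"
    using assms(1) tsize_swap_subtrees[OF assms(1), of t] by (metis empty_iff insertE)
  then have "swap_subtrees a b t = t"
    using assms swap_subtrees_fixes[OF assms(1), of t] by simp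
  with swapped assms(2) show False by simp
qed

lemma swap_subtrees_swap_subtrees:
  assumes "tsize a = tsize b"
  shows "swap_subtrees a b (swap_subtrees a b t) = t"
proof (induct t)
  case (Node M)
  show ?case
  proof (cases "Node M \<in> {a, b}")
    case True
    then show ?thesis
      using swap_subtrees_left[of a b] swap_subtrees_right[of a b] by (elim insertE) auto
  next
    case False
    then have "swap_subtrees a b (Node M) \<notin> {a, b}"
      by (rule swap_subtrees_notin[OF assms])
    moreover have "image_mset (swap_subtrees a b) (image_mset (swap_subtrees a b) M) = M"
      using Node.hyps by (simp add: multiset.map_comp o_def multiset.map_ident_strong)
    ultimately show ?thesis using False by simp
  qed
qed

lemma bounded_outdeg_swap_subtrees:
  assumes "bounded_outdeg m a" and "bounded_outdeg m b"
  shows "bounded_outdeg m t \<Longrightarrow> bounded_outdeg m (swap_subtrees a b t)"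
  using assms by (induct t) auto

lemma count_fringe_swap_subtrees:
  assumes "tsize a = tsize b"
  shows "count (fringe (swap_subtrees a b t)) b = count (fringe t) a"
proof (induct t)
  case (Node M)
  consider "Node M = a" | "Node M = b" "Node M \<noteq> a" | "Node M \<notin> {a, b}"
    by blast
  then show ?case
  proof cases
    case 1
    then show ?thesis
      using swap_subtrees_left[of a b] count_fringe_self[of a] count_fringe_self[of b] by simp
  next
    case 2
    then have "swap_subtrees a b (Node M) = a" "count (fringe (Node M)) a = 0"
      using assms swap_subtrees_right[of a b] count_fringe_eq_0[of "Node M" a] by simp_all
    then show ?thesis
      using assms 2 count_fringe_eq_0[of a b] by simp
  next
    case 3
    then have "swap_subtrees a b (Node M) \<notin> {a, b}"
      by (rule swap_subtrees_notin[OF assms])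
    have "image_mset (\<lambda>c. count (fringe (swap_subtrees a b c)) b) M
        = image_mset (\<lambda>c. count (fringe c) a) M"
      using Node.hyps by (rule image_mset_cong)
    with 3 \<open>swap_subtrees a b (Node M) \<notin> {a, b}\<close> show ?thesis
      by (simp add: count_sum_mset_image multiset.map_comp o_def)
  qed
qed

lemma bij_betw_swap_subtrees_trees:
  assumes "a \<in> trees m k" and "b \<in> trees m k"
  shows "bij_betw (swap_subtrees a b) (trees m n) (trees m n)"
proof -
  have size_eq: "tsize a = tsize b" using assms by (simp add: trees_def)
  have "swap_subtrees a b ` trees m n \<subseteq> trees m n"
    using assms bounded_outdeg_swap_subtrees tsize_swap_subtrees[OF size_eq]
    by (auto simp: trees_def)
  then show ?thesis
    by (intro bij_betw_byWitness) (simp_all add: swap_subtrees_swap_subtrees[OF size_eq])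
qed

lemma sum_count_fringe_trees_eq:
  assumes "a \<in> trees m k" and "b \<in> trees m k"
  shows "(\<Sum>T\<in>trees m n. count (fringe T) a) = (\<Sum>T\<in>trees m n. count (fringe T) b)"
proof -
  have size_eq: "tsize a = tsize b" using assms by (simp add: trees_def)
  have "(\<Sum>T\<in>trees m n. count (fringe T) b)
      = (\<Sum>T\<in>trees m n. count (fringe (swap_subtrees a b T)) b)"
    by (rule sum.reindex_bij_betw[OF bij_betw_swap_subtrees_trees[OF assms], symmetric])
  also have "\<dots> = (\<Sum>T\<in>trees m n. count (fringe T) a)"
    by (simp add: count_fringe_swap_subtrees[OF size_eq])
  finally show ?thesis by simp
qed

primrec path_tree :: "nat \<Rightarrow> utree" where
  "path_tree 0 = Node {#}"
| "path_tree (Suc j) = Node {#path_tree j#}"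

lemma tsize_path_tree: "tsize (path_tree j) = Suc j"
  by (induct j) auto

lemma bounded_outdeg_path_tree: "1 \<le> m \<Longrightarrow> bounded_outdeg m (path_tree j)"
  by (induct j) (auto simp: one_enat_def zero_enat_def[symmetric])

lemma path_tree_in_fringe: "i \<le> j \<Longrightarrow> path_tree i \<in># fringe (path_tree j)"
proof (induct j)
  case (Suc j)
  then show ?case by (cases "i = Suc j") auto
qed simp

lemma ex_trees_fringe_tsize:
  assumes "1 \<le> m" and "1 \<le> k" and "k \<le> n"
  shows "\<exists>T\<in>trees m n. \<exists>t\<in>#fringe T. tsize t = k"
proof -
  have "path_tree (n - 1) \<in> trees m n"
    using assms by (simp add: trees_def tsize_path_tree bounded_outdeg_path_tree)
  moreover have "path_tree (k - 1) \<in># fringe (path_tree (n - 1))"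
    using assms by (intro path_tree_in_fringe) simp
  moreover have "tsize (path_tree (k - 1)) = k"
    using assms by (simp add: tsize_path_tree)
  ultimately show ?thesis by blast
qed

lemma set_fringe_subtree_pmf:
  assumes "trees m n \<noteq> {}"
  shows "set_pmf (fringe_subtree_pmf m n) = (\<Union>T\<in>trees m n. set_mset (fringe T))"
proof -
  have "fringe T \<noteq> {#}" for T by (cases T) simp
  then show ?thesis
    using assms by (simp add: fringe_subtree_pmf_def finite_trees)
qed

lemma pmf_fringe_subtree_pmf:
  assumes "trees m n \<noteq> {}"
  shows "pmf (fringe_subtree_pmf m n) t
    = real (\<Sum>T\<in>trees m n. count (fringe T) t) / (real n * real (card (trees m n)))"
proof -
  have "fringe T \<noteq> {#}" for T by (cases T) simp
  then have "pmf (fringe_subtree_pmf m n) t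
      = (\<Sum>T\<in>trees m n. real (count (fringe T) t) / real (tsize T)) / real (card (trees m n))"
    using assms by (simp add: fringe_subtree_pmf_def pmf_bind_pmf_of_set finite_trees size_fringe)
  also have "\<dots> = (\<Sum>T\<in>trees m n. real (count (fringe T) t) / real n) / real (card (trees m n))"
    by (simp add: trees_def)
  finally show ?thesis by (simp add: sum_divide_distrib)
qed

lemma pmf_eq_pmf_of_setI:
  assumes "finite B" and "set_pmf p \<subseteq> B" and "\<And>x y. x \<in> B \<Longrightarrow> y \<in> B \<Longrightarrow> pmf p x = pmf p y"
  shows "p = pmf_of_set B"
proof -
  obtain b where b: "b \<in> B" using assms(2) set_pmf_not_empty[of p] by blast
  then have uniform: "pmf (pmf_of_set B) x = indicator B x / card B" for x
    using assms(1) by (intro pmf_of_set) auto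
  have "1 = (\<Sum>x\<in>B. pmf p x)" by (rule sum_pmf_eq_1[OF assms(1,2), symmetric])
  also have "\<dots> = real (card B) * pmf p b" using assms(3)[OF _ b] by simp
  finally have "real (card B) * pmf p b = 1" by simp
  moreover have "card B > 0" using assms(1) b card_gt_0_iff by blast
  ultimately have pmf_b: "pmf p b = 1 / real (card B)"
    by (simp add: field_simps)
  show ?thesis
  proof (rule pmf_eqI)
    fix x
    show "pmf p x = pmf (pmf_of_set B) x"
    proof (cases "x \<in> B")
      case True
      with assms(1) b pmf_b assms(3)[OF True b] show ?thesis
        by (simp add: uniform)
    next
      case False
      with assms(1,2) b show ?thesis
        by (auto simp: set_pmf_iff uniform)
    qed
  qed
qed

lemma cond_pmf_eq_pmf_of_setI:
  assumes "set_pmf p \<inter> A \<noteq> {}" and "finite B" and "set_pmf p \<inter> A \<subseteq> B" and "B \<subseteq> A"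
    and "\<And>x y. x \<in> B \<Longrightarrow> y \<in> B \<Longrightarrow> pmf p x = pmf p y"
  shows "cond_pmf p A = pmf_of_set B"
proof (rule pmf_eq_pmf_of_setI)
  show "set_pmf (cond_pmf p A) \<subseteq> B"
    using assms(3) by (simp add: set_cond_pmf[OF assms(1)])
  fix x y assume "x \<in> B" "y \<in> B"
  then have "x \<in> A" "y \<in> A" and "pmf p x = pmf p y"
    using assms(4,5) by blast+
  then show "pmf (cond_pmf p A) x = pmf (cond_pmf p A) y"
    by (simp add: pmf_cond[OF assms(1)])
qed fact

theorem lemma25:
  fixes m :: enat and n k :: nat
  assumes "m \<ge> 2" and "1 \<le> k" and "k \<le> n"
  shows "cond_pmf (fringe_subtree_pmf m n) {t. tsize t = k} = pmf_of_set (trees m k)"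
proof -
  have "1 \<le> m" using assms(1) by (rule order_trans[rotated]) simp
  with assms(2,3) obtain T t where T: "T \<in> trees m n" and t: "t \<in># fringe T" "tsize t = k"
    using ex_trees_fringe_tsize by blast
  then have nonempty: "trees m n \<noteq> {}" by blast
  note set_p = set_fringe_subtree_pmf[OF nonempty]
  show ?thesis
  proof (rule cond_pmf_eq_pmf_of_setI[OF _ finite_trees])
    show "set_pmf (fringe_subtree_pmf m n) \<inter> {t. tsize t = k} \<noteq> {}"
      using T t unfolding set_p by blast
    show "set_pmf (fringe_subtree_pmf m n) \<inter> {t. tsize t = k} \<subseteq> trees m k"
      using bounded_outdeg_of_in_fringe unfolding set_p trees_def by blast
    show "trees m k \<subseteq> {t. tsize t = k}"
      by (auto simp: trees_def)
    fix x y assume "x \<in> trees m k" "y \<in> trees m k"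
    then show "pmf (fringe_subtree_pmf m n) x = pmf (fringe_subtree_pmf m n) y"
      unfolding pmf_fringe_subtree_pmf[OF nonempty] by (simp only: sum_count_fringe_trees_eq[of x m k y])
  qed
qed

end
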